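(* Let $F$ be a field and let $V$ be an $F$-vector space of dimension $2m$. If $F$ admits a field extension of degree $m$, then there exists an $m$-dimensional symplectic subspace $K \subset \mathcal{A}(V)$.
   Context: $\mathcal{A}(V)$ denotes the $F$-vector space of alternating bilinear forms on $V$, i.e. bilinear maps $b: V \times V \to F$ with $b(v,v)=0$ for all $v$. A subspace $K \subseteq \mathcal{A}(V)$ is called symplectic if every nonzero element of $K$ is non-degenerate as a bilinear form on $V$. *)

theory Defs
  imports Complex_Main "HOL-Library.Function_Algebras"
begin

definition has_dim :: "('a::field \<Rightarrow> 'b::ab_group_add \<Rightarrow> 'b) \<Rightarrow> 'b set \<Rightarrow> nat \<Rightarrow> bool" where
  "has_dim s S n \<longleftrightarrow> (\<exists>B. finite B \<and> card B = n \<and> \<not> module.dependent s B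
                              \<and> module.span s B = S)"

definition alt_bilinear :: "('a::field \<Rightarrow> 'v::ab_group_add \<Rightarrow> 'v) \<Rightarrow> ('v \<Rightarrow> 'v \<Rightarrow> 'a) \<Rightarrow> bool" where
  "alt_bilinear s b \<longleftrightarrow> (\<forall>x. Vector_Spaces.linear s (*) (b x))
                       \<and> (\<forall>y. Vector_Spaces.linear s (*) (\<lambda>x. b x y))
                       \<and> (\<forall>v. b v v = 0)"

definition altforms :: "('a::field \<Rightarrow> 'v::ab_group_add \<Rightarrow> 'v) \<Rightarrow> ('v \<Rightarrow> 'v \<Rightarrow> 'a) set" where
  "altforms s = {b. alt_bilinear s b}"

definition form_scale :: "'a::field \<Rightarrow> ('v \<Rightarrow> 'v \<Rightarrow> 'a) \<Rightarrow> ('v \<Rightarrow> 'v \<Rightarrow> 'a)" where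
  "form_scale c b = (\<lambda>x y. c * b x y)"

definition nondegenerate :: "('v::zero \<Rightarrow> 'v \<Rightarrow> 'a::zero) \<Rightarrow> bool" where
  "nondegenerate b \<longleftrightarrow> (\<forall>x. (\<forall>y. b x y = 0) \<longrightarrow> x = 0)"

definition symplectic :: "('v::zero \<Rightarrow> 'v \<Rightarrow> 'a::zero) set \<Rightarrow> bool" where
  "symplectic K \<longleftrightarrow> (\<forall>b\<in>K. b \<noteq> 0 \<longrightarrow> nondegenerate b)"

definition field_hom :: "('a::field \<Rightarrow> 'e::field) \<Rightarrow> bool" where
  "field_hom i \<longleftrightarrow> i 1 = 1 \<and> (\<forall>x y. i (x + y) = i x + i y) \<and> (\<forall>x y. i (x * y) = i x * i y)"

end

theory Submission
  imports Defs
begin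

text \<open>Let E be the degree m extension. An F-linear isomorphism of V with E \<times> E turns the
  determinant det(x, y) = x1 y2 - x2 y1 into an alternating form on V with values in E.
  Composing l * det with a fixed nonzero F-linear functional \<tau> on E gives alternating
  F-bilinear forms b l, depending linearly on l. For l \<noteq> 0 and x \<noteq> 0 the map
  y \<mapsto> l * det(x, y) is onto E, so \<tau> does not vanish on it and b l is non-degenerate. Hence
  l \<mapsto> b l is injective, and its image is an m-dimensional symplectic subspace.\<close>

lemma vector_space_mult: "vector_space ((*) :: 'a::field \<Rightarrow> 'a \<Rightarrow> 'a)"
  by (simp add: vector_space_def algebra_simps)

lemma vector_space_field_hom_scale: "field_hom i \<Longrightarrow> vector_space (\<lambda>c x. i c * x)"
  by (simp add: vector_space_def field_hom_def algebra_simps)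

lemma vector_space_form_scale: "vector_space (form_scale :: 'a::field \<Rightarrow> ('v \<Rightarrow> 'v \<Rightarrow> 'a) \<Rightarrow> _)"
  by (simp add: vector_space_def form_scale_def fun_eq_iff algebra_simps)

lemma (in vector_space_pair) linear_eq_on_spanning:
  assumes "Vector_Spaces.linear s1 s2 f" "Vector_Spaces.linear s1 s2 g"
    and "vs1.span B = UNIV" "\<And>b. b \<in> B \<Longrightarrow> f b = g b"
  shows "f = g"
  using linear_eq_on[OF assms(1,2) _ assms(4)] assms(3) by blast

lemma (in vector_space_pair) has_dim_range_injective:
  assumes f: "Vector_Spaces.linear s1 s2 f" "inj f" and dim: "has_dim s1 UNIV n"
  shows "has_dim s2 (range f) n"
proof -
  obtain B where B: "finite B" "card B = n" "vs1.independent B" "vs1.span B = UNIV"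
    using dim unfolding has_dim_def by blast
  show ?thesis
    unfolding has_dim_def
  proof (intro exI conjI)
    show "finite (f ` B)" "card (f ` B) = n"
      using B(1,2) card_image[OF inj_on_subset[OF f(2)]] by auto
    show "vs2.independent (f ` B)"
      using linear_independent_injective_image[OF f(1) B(3)] inj_on_subset[OF f(2)] by blast
    show "vs2.span (f ` B) = range f"
      using linear_span_image[OF f(1), of B] B(4) by simp
  qed
qed

lemma (in vector_space) exists_linear_functional:
  assumes "x \<noteq> 0"
  obtains \<tau> where "Vector_Spaces.linear scale (*) \<tau>" "\<tau> x = 1"
proof -
  interpret vector_space_pair scale "(*)"
    by (simp add: vector_space_pair_def vector_space_axioms vector_space_mult)
  obtain B where B: "x \<in> B" "independent B"
    using maximal_independent_subset_extend[of "{x}" UNIV] assms by auto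
  let ?\<tau> = "construct B (\<lambda>b. if b = x then 1 else 0)"
  show thesis
    by (rule that[of ?\<tau>]) (simp_all add: linear_construct construct_basis B)
qed

lemma (in vector_space_pair) direct_sum_of_basis_bijection:
  assumes B1: "vs1.independent B1" "vs1.span B1 = UNIV"
    and B2: "vs2.independent B2" "vs2.span B2 = UNIV"
    and f: "bij_betw f (B2 \<times> (UNIV :: bool set)) B1"
  obtains p1 p2 q1 q2
  where "Vector_Spaces.linear s1 s2 p1" "Vector_Spaces.linear s1 s2 p2"
    "Vector_Spaces.linear s2 s1 q1" "Vector_Spaces.linear s2 s1 q2"
    "\<And>a b. p1 (q1 a + q2 b) = a" "\<And>a b. p2 (q1 a + q2 b) = b"
    "\<And>x. q1 (p1 x) + q2 (p2 x) = x"
proof -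
  interpret swap: vector_space_pair s2 s1 by unfold_locales
  interpret endo1: vector_space_pair s1 s1 by unfold_locales
  interpret endo2: vector_space_pair s2 s2 by unfold_locales
  define g where "g = the_inv_into (B2 \<times> (UNIV :: bool set)) f"
  have gf: "g (f (w, b)) = (w, b)" and f_in: "f (w, b) \<in> B1" if "w \<in> B2" for w b
    unfolding g_def using f that by (auto simp: bij_betw_def the_inv_into_f_f)
  have fg: "g v \<in> B2 \<times> UNIV" "f (g v) = v" if "v \<in> B1" for v
    unfolding g_def using f that by (auto simp: bij_betw_def f_the_inv_into_f the_inv_into_into)
  define q1 where "q1 = swap.construct B2 (\<lambda>w. f (w, True))"
  define q2 where "q2 = swap.construct B2 (\<lambda>w. f (w, False))"
  define p1 where "p1 = construct B1 (\<lambda>v. if snd (g v) then fst (g v) else 0)"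
  define p2 where "p2 = construct B1 (\<lambda>v. if snd (g v) then 0 else fst (g v))"
  have lin: "Vector_Spaces.linear s2 s1 q1" "Vector_Spaces.linear s2 s1 q2"
    "Vector_Spaces.linear s1 s2 p1" "Vector_Spaces.linear s1 s2 p2"
    unfolding q1_def q2_def p1_def p2_def using B1 B2
    by (simp_all add: swap.linear_construct linear_construct)
  have q_basis: "q1 w = f (w, True)" "q2 w = f (w, False)" if "w \<in> B2" for w
    unfolding q1_def q2_def using B2 that by (simp_all add: swap.construct_basis)
  have p_basis: "p1 v = (if snd (g v) then fst (g v) else 0)"
    "p2 v = (if snd (g v) then 0 else fst (g v))" if "v \<in> B1" for v
    unfolding p1_def p2_def using B1 that by (simp_all add: construct_basis)
  have "p1 \<circ> q1 = id" "p2 \<circ> q2 = id" "p1 \<circ> q2 = (\<lambda>_. 0)" "p2 \<circ> q1 = (\<lambda>_. 0)"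
    by (intro endo2.linear_eq_on_spanning[OF _ _ B2(2)] Vector_Spaces.linear_compose[OF lin(1)]
        Vector_Spaces.linear_compose[OF lin(2)] lin vs2.linear_id endo2.linear_zero;
        simp add: q_basis p_basis f_in gf)+
  then have "p1 (q1 a + q2 b) = a" "p2 (q1 a + q2 b) = b" for a b
    by (simp_all add: linear_add[OF lin(3)] linear_add[OF lin(4)] fun_eq_iff)
  moreover have "(\<lambda>v. q1 (p1 v) + q2 (p2 v)) = id"
  proof (rule endo1.linear_eq_on_spanning[OF _ vs1.linear_id B1(2)])
    show "Vector_Spaces.linear s1 s1 (\<lambda>v. q1 (p1 v) + q2 (p2 v))"
      using Vector_Spaces.linear_compose[OF lin(3) lin(1)]
        Vector_Spaces.linear_compose[OF lin(4) lin(2)]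
      by (intro endo1.linear_compose_add) (simp_all add: comp_def)
    show "q1 (p1 v) + q2 (p2 v) = id v" if "v \<in> B1" for v
      using fg[OF that] p_basis[OF that] q_basis swap.linear_0[OF lin(1)] swap.linear_0[OF lin(2)]
      by (cases "g v") (auto split: if_splits)
  qed
  ultimately show thesis
    using that[OF lin(3,4,1,2)] by (simp add: fun_eq_iff)
qed

lemma has_dim_double_coordinates:
  fixes s :: "'a::field \<Rightarrow> 'v::ab_group_add \<Rightarrow> 'v" and t :: "'a \<Rightarrow> 'w::ab_group_add \<Rightarrow> 'w"
  assumes V: "vector_space s" and W: "vector_space t"
    and dimV: "has_dim s UNIV (2 * n)" and dimW: "has_dim t UNIV n"
  obtains p1 p2 where "Vector_Spaces.linear s t p1" "Vector_Spaces.linear s t p2"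
    "\<And>x. p1 x = 0 \<Longrightarrow> p2 x = 0 \<Longrightarrow> x = 0" "\<And>a b. \<exists>x. p1 x = a \<and> p2 x = b"
proof -
  interpret VW: vector_space_pair s t using V W by (simp add: vector_space_pair_def)
  obtain BW where BW: "finite BW" "card BW = n" "\<not> module.dependent t BW" "module.span t BW = UNIV"
    using dimW unfolding has_dim_def by blast
  obtain BV where BV: "finite BV" "card BV = 2 * n" "\<not> module.dependent s BV" "module.span s BV = UNIV"
    using dimV unfolding has_dim_def by blast
  have "card (BW \<times> (UNIV :: bool set)) = card BV"
    using BW BV by (simp add: card_cartesian_product)
  then obtain f where "bij_betw f (BW \<times> (UNIV :: bool set)) BV"
    using BW(1) BV(1) by (metis bij_betw_iff_card finite_SigmaI finite_code)
  then obtain p1 p2 q1 q2 where lin: "Vector_Spaces.linear s t p1" "Vector_Spaces.linear s t p2"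
      "Vector_Spaces.linear t s q1" "Vector_Spaces.linear t s q2"
    and pq: "\<And>a b. p1 (q1 a + q2 b) = a" "\<And>a b. p2 (q1 a + q2 b) = b"
    and qp: "\<And>x. q1 (p1 x) + q2 (p2 x) = x"
    using VW.direct_sum_of_basis_bijection[OF BV(3,4) BW(3,4)] by blast
  show thesis
  proof (rule that[OF lin(1,2)])
    show "x = 0" if "p1 x = 0" "p2 x = 0" for x
      using qp[of x] that vector_space_pair.linear_0[OF _ lin(3)]
        vector_space_pair.linear_0[OF _ lin(4)] V W by (simp add: vector_space_pair_def)
    show "\<exists>x. p1 x = a \<and> p2 x = b" for a b
      using pq by blast
  qed
qed

text \<open>\<tau> plays the role of the trace of E/F; any nonzero functional works, which also covers
  inseparable extensions, where the trace vanishes.\<close>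

definition trace_det_form :: "('e::field \<Rightarrow> 'a) \<Rightarrow> ('v \<Rightarrow> 'e) \<Rightarrow> ('v \<Rightarrow> 'e) \<Rightarrow> 'e \<Rightarrow> 'v \<Rightarrow> 'v \<Rightarrow> 'a"
  where "trace_det_form \<tau> p1 p2 l x y = \<tau> (l * (p1 x * p2 y - p2 x * p1 y))"

lemma trace_det_form_altform:
  fixes s :: "'a::field \<Rightarrow> 'v::ab_group_add \<Rightarrow> 'v" and i :: "'a \<Rightarrow> 'e::field"
  assumes V: "vector_space s" and i: "field_hom i"
    and \<tau>: "Vector_Spaces.linear (\<lambda>c x. i c * x) (*) \<tau>"
    and p: "Vector_Spaces.linear s (\<lambda>c x. i c * x) p1" "Vector_Spaces.linear s (\<lambda>c x. i c * x) p2"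
  shows "trace_det_form \<tau> p1 p2 l \<in> altforms s"
proof -
  have F: "vector_space ((*) :: 'a \<Rightarrow> _)" by (rule vector_space_mult)
  have \<tau>_add: "\<tau> (a + b) = \<tau> a + \<tau> b" and \<tau>_scale: "\<tau> (i c * a) = c * \<tau> a" for a b c
    using \<tau> by (simp_all add: Vector_Spaces.linear_iff)
  have p_add: "p1 (x + y) = p1 x + p1 y" "p2 (x + y) = p2 x + p2 y"
    and p_scale: "p1 (s c x) = i c * p1 x" "p2 (s c x) = i c * p2 x" for x y c
    using p by (simp_all add: Vector_Spaces.linear_iff)
  have "Vector_Spaces.linear s (*) (trace_det_form \<tau> p1 p2 l x)"
    and "Vector_Spaces.linear s (*) (\<lambda>y. trace_det_form \<tau> p1 p2 l y x)" for x
    using V F by (simp_all add: Vector_Spaces.linear_iff trace_det_form_def p_add p_scale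
        algebra_simps flip: \<tau>_add \<tau>_scale)
  moreover have "trace_det_form \<tau> p1 p2 l x x = 0" for x
    using \<tau>_scale[of 0 0] i by (simp add: trace_det_form_def field_hom_def)
  ultimately show ?thesis
    by (simp add: altforms_def alt_bilinear_def)
qed

lemma linear_trace_det_form:
  fixes i :: "'a::field \<Rightarrow> 'e::field"
  assumes i: "field_hom i" and \<tau>: "Vector_Spaces.linear (\<lambda>c x. i c * x) (*) \<tau>"
  shows "Vector_Spaces.linear (\<lambda>c x. i c * x) form_scale (trace_det_form \<tau> p1 p2)"
proof -
  have \<tau>_add: "\<tau> (a + b) = \<tau> a + \<tau> b" and \<tau>_scale: "\<tau> (i c * a) = c * \<tau> a" for a b c
    using \<tau> by (simp_all add: Vector_Spaces.linear_iff)
  show ?thesis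
    using vector_space_field_hom_scale[OF i] vector_space_form_scale
    by (simp add: Vector_Spaces.linear_iff trace_det_form_def form_scale_def fun_eq_iff
        algebra_simps flip: \<tau>_add \<tau>_scale)
qed

lemma nondegenerate_trace_det_form:
  fixes \<tau> :: "'e::field \<Rightarrow> 'a::field"
  assumes \<tau>: "\<tau> e = 1"
    and p_inj: "\<And>x. p1 x = 0 \<Longrightarrow> p2 x = 0 \<Longrightarrow> x = 0"
    and p_surj: "\<And>a b. \<exists>y. p1 y = a \<and> p2 y = b"
    and "l \<noteq> 0"
  shows "nondegenerate (trace_det_form \<tau> p1 p2 l)"
  unfolding nondegenerate_def
proof (intro allI impI)
  fix x
  assume x: "\<forall>y. trace_det_form \<tau> p1 p2 l x y = 0"
  have "p1 x = 0"
  proof (rule ccontr)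
    assume "p1 x \<noteq> 0"
    obtain y where "p1 y = 0" "p2 y = e / (l * p1 x)"
      using p_surj by blast
    then have "trace_det_form \<tau> p1 p2 l x y = 1"
      using \<open>p1 x \<noteq> 0\<close> \<open>l \<noteq> 0\<close> \<tau> by (simp add: trace_det_form_def)
    with x show False by simp
  qed
  moreover have "p2 x = 0"
  proof (rule ccontr)
    assume "p2 x \<noteq> 0"
    obtain y where "p1 y = - e / (l * p2 x)" "p2 y = 0"
      using p_surj by blast
    then have "trace_det_form \<tau> p1 p2 l x y = 1"
      using \<open>p2 x \<noteq> 0\<close> \<open>l \<noteq> 0\<close> \<tau> by (simp add: trace_det_form_def)
    with x show False by simp
  qed
  ultimately show "x = 0"
    by (rule p_inj)
qed

lemma trace_det_form_eq_0_imp: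
  fixes \<tau> :: "'e::field \<Rightarrow> 'a::field" and p1 p2 :: "'v::zero \<Rightarrow> 'e"
  assumes "\<tau> e = 1"
    and "\<And>x. p1 x = 0 \<Longrightarrow> p2 x = 0 \<Longrightarrow> x = 0"
    and p_surj: "\<And>a b. \<exists>y. p1 y = a \<and> p2 y = b"
    and "trace_det_form \<tau> p1 p2 l = 0"
  shows "l = 0"
proof (rule ccontr)
  assume "l \<noteq> 0"
  then have "x = 0" for x :: 'v
    using nondegenerate_trace_det_form[of \<tau> e p1 p2 l] assms by (auto simp: nondegenerate_def)
  moreover obtain x where "p1 x = 1"
    using p_surj by blast
  moreover obtain y where "p1 y = 0"
    using p_surj by blast
  ultimately show False
    by (metis zero_neq_one)
qed

theorem lemma2p3:
  fixes s :: "'a::field \<Rightarrow> 'v::ab_group_add \<Rightarrow> 'v"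
    and m :: nat
    and i :: "'a \<Rightarrow> 'e::field"
  assumes V: "vector_space s"
    and dimV: "has_dim s UNIV (2 * m)"
    and ext: "field_hom i"
    and deg: "has_dim (\<lambda>c x. i c * x) UNIV m"
  shows "\<exists>K. K \<subseteq> altforms s \<and> module.subspace form_scale K
             \<and> has_dim form_scale K m \<and> symplectic K"
proof -
  have E: "vector_space (\<lambda>c x. i c * x)"
    using ext by (rule vector_space_field_hom_scale)
  interpret EK: vector_space_pair "\<lambda>c x. i c * x" form_scale
    using E vector_space_form_scale by (simp add: vector_space_pair_def)
  obtain p1 p2 where p: "Vector_Spaces.linear s (\<lambda>c x. i c * x) p1"
      "Vector_Spaces.linear s (\<lambda>c x. i c * x) p2"
    and p_inj: "\<And>x. p1 x = 0 \<Longrightarrow> p2 x = 0 \<Longrightarrow> x = 0"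
    and p_surj: "\<And>a b. \<exists>x. p1 x = a \<and> p2 x = b"
    using has_dim_double_coordinates[OF V E dimV deg] by blast
  obtain \<tau> where \<tau>: "Vector_Spaces.linear (\<lambda>c x. i c * x) (*) \<tau>" "\<tau> 1 = 1"
    using vector_space.exists_linear_functional[OF E, of 1] by auto
  define L where "L = trace_det_form \<tau> p1 p2"
  have L_linear: "Vector_Spaces.linear (\<lambda>c x. i c * x) form_scale L"
    unfolding L_def using ext \<tau>(1) by (rule linear_trace_det_form)
  have L_nondegenerate: "nondegenerate (L l)" if "l \<noteq> 0" for l
    unfolding L_def using \<tau>(2) p_inj p_surj that by (rule nondegenerate_trace_det_form)
  have "inj L"
    unfolding EK.linear_inj_iff_eq_0[OF L_linear]
  proof (intro allI impI)
    show "l = 0" if "L l = 0" for l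
      using \<tau>(2) p_inj p_surj that unfolding L_def by (rule trace_det_form_eq_0_imp)
  qed
  show ?thesis
  proof (intro exI conjI)
    show "range L \<subseteq> altforms s"
      unfolding L_def using trace_det_form_altform[OF V ext \<tau>(1) p] by blast
    show "module.subspace form_scale (range L)"
      by (rule EK.linear_subspace_image[OF L_linear EK.vs1.subspace_UNIV])
    show "has_dim form_scale (range L) m"
      using L_linear \<open>inj L\<close> deg by (rule EK.has_dim_range_injective)
    show "symplectic (range L)"
      using L_nondegenerate EK.linear_0[OF L_linear] by (force simp: symplectic_def)
  qed
qed

end
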